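(* Let $\mathcal{A}$ be a complex vector space with two bilinear operations $[\cdot,\cdot]$ and $\circ$ and a linear endomorphism $\alpha$. Let $\mathcal{L}(\mathcal{A})=\mathcal{A}\otimes\mathbb{C}[t,t^{-1}]$ with bilinear bracket $[u\otimes t^m,v\otimes t^n]=[u,v]\otimes t^{m+n}+m\,(u\circ v)\otimes t^{m+n-1}-n\,(v\circ u)\otimes t^{m+n-1}$ for $u,v\in\mathcal{A}$, $m,n\in\mathbb{Z}$, and linear map $\varphi(u\otimes t^m)=\alpha(u)\otimes t^m$. Then $(\mathcal{L}(\mathcal{A}),[-,-],\varphi)$ is a Hom-Lie algebra if and only if $(\mathcal{A},[\cdot,\cdot],\circ,\alpha)$ is a Hom Gel'fand-Dorfman bialgebra.
   Context: A Hom-Lie algebra is a vector space $L$ with a bilinear map $[\cdot,\cdot]$ and linear map $\alpha$ with $[x,y]=-[y,x]$ and $[[x,y],\alpha(z)]+[[y,z],\alpha(x)]+[[z,x],\alpha(y)]=0$ for all $x,y,z$. A Hom-Novikov algebra is a vector space with a bilinear operation $\circ$ and a linear endomorphism $\alpha$ such that $(x\circ y)\circ\alpha(z)-\alpha(x)\circ(y\circ z)=(y\circ x)\circ\alpha(z)-\alpha(y)\circ(x\circ z)$ and $(x\circ y)\circ\alpha(z)=(x\circ z)\circ\alpha(y)$ for all $x,y,z$. A Hom Gel'fand-Dorfman bialgebra is a vector space $\mathcal{A}$ with a linear endomorphism $\alpha$ and two bilinear operations $[\cdot,\cdot],\circ$ such that $(\mathcal{A},[\cdot,\cdot],\alpha)$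 is a Hom-Lie algebra, $(\mathcal{A},\circ,\alpha)$ is a Hom-Novikov algebra, and $[x\circ y,\alpha(z)]-[x\circ z,\alpha(y)]+[x,y]\circ\alpha(z)-[x,z]\circ\alpha(y)-\alpha(x)\circ[y,z]=0$ for all $x,y,z$. *)

theory Defs
  imports Complex_Main "HOL-Library.Function_Algebras"
begin

text \<open>A complex vector space is modelled by a type 'a :: ab_group_add together with a
scalar multiplication sc :: complex \<Rightarrow> 'a \<Rightarrow> 'a satisfying the vector space axioms
(locale vector_space).\<close>

definition subspace_on :: "(complex \<Rightarrow> 'v \<Rightarrow> 'v) \<Rightarrow> ('v::ab_group_add) set \<Rightarrow> bool" where
  "subspace_on sc V \<longleftrightarrow> 0 \<in> V \<and> (\<forall>x\<in>V. \<forall>y\<in>V. x + y \<in> V) \<and> (\<forall>c. \<forall>x\<in>V. sc c x \<in> V)"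

definition linear_on :: "(complex \<Rightarrow> 'v \<Rightarrow> 'v) \<Rightarrow> ('v::ab_group_add) set \<Rightarrow> ('v \<Rightarrow> 'v) \<Rightarrow> bool" where
  "linear_on sc V f \<longleftrightarrow> (\<forall>x\<in>V. f x \<in> V) \<and>
     (\<forall>x\<in>V. \<forall>y\<in>V. f (x + y) = f x + f y) \<and> (\<forall>c. \<forall>x\<in>V. f (sc c x) = sc c (f x))"

definition bilinear_on :: "(complex \<Rightarrow> 'v \<Rightarrow> 'v) \<Rightarrow> ('v::ab_group_add) set \<Rightarrow> ('v \<Rightarrow> 'v \<Rightarrow> 'v) \<Rightarrow> bool" where
  "bilinear_on sc V b \<longleftrightarrow> (\<forall>x\<in>V. \<forall>y\<in>V. b x y \<in> V) \<and>
     (\<forall>x\<in>V. \<forall>y\<in>V. \<forall>z\<in>V. b (x + y) z = b x z + b y z \<and> b z (x + y) = b z x + b z y) \<and>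
     (\<forall>c. \<forall>x\<in>V. \<forall>y\<in>V. b (sc c x) y = sc c (b x y) \<and> b x (sc c y) = sc c (b x y))"

definition hom_lie_on ::
  "(complex \<Rightarrow> 'v \<Rightarrow> 'v) \<Rightarrow> ('v::ab_group_add) set \<Rightarrow> ('v \<Rightarrow> 'v \<Rightarrow> 'v) \<Rightarrow> ('v \<Rightarrow> 'v) \<Rightarrow> bool" where
  "hom_lie_on sc V br al \<longleftrightarrow> subspace_on sc V \<and> bilinear_on sc V br \<and> linear_on sc V al \<and>
     (\<forall>x\<in>V. \<forall>y\<in>V. br x y = - br y x) \<and>
     (\<forall>x\<in>V. \<forall>y\<in>V. \<forall>z\<in>V. br (br x y) (al z) + br (br y z) (al x) + br (br z x) (al y) = 0)"

definition hom_novikov_on ::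
  "(complex \<Rightarrow> 'v \<Rightarrow> 'v) \<Rightarrow> ('v::ab_group_add) set \<Rightarrow> ('v \<Rightarrow> 'v \<Rightarrow> 'v) \<Rightarrow> ('v \<Rightarrow> 'v) \<Rightarrow> bool" where
  "hom_novikov_on sc V nv al \<longleftrightarrow> subspace_on sc V \<and> bilinear_on sc V nv \<and> linear_on sc V al \<and>
     (\<forall>x\<in>V. \<forall>y\<in>V. \<forall>z\<in>V.
        nv (nv x y) (al z) - nv (al x) (nv y z) = nv (nv y x) (al z) - nv (al y) (nv x z)) \<and>
     (\<forall>x\<in>V. \<forall>y\<in>V. \<forall>z\<in>V. nv (nv x y) (al z) = nv (nv x z) (al y))"

definition hom_GD_bialgebra_on ::
  "(complex \<Rightarrow> 'v \<Rightarrow> 'v) \<Rightarrow> ('v::ab_group_add) set \<Rightarrow> ('v \<Rightarrow> 'v \<Rightarrow> 'v) \<Rightarrow> ('v \<Rightarrow> 'v \<Rightarrow> 'v)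
     \<Rightarrow> ('v \<Rightarrow> 'v) \<Rightarrow> bool" where
  "hom_GD_bialgebra_on sc V br nv al \<longleftrightarrow> hom_lie_on sc V br al \<and> hom_novikov_on sc V nv al \<and>
     (\<forall>x\<in>V. \<forall>y\<in>V. \<forall>z\<in>V.
        br (nv x y) (al z) - br (nv x z) (al y) + nv (br x y) (al z) - nv (br x z) (al y)
          - nv (al x) (br y z) = 0)"

text \<open>The loop space L(A) = A \<otimes> C[t,t^-1] is modelled as the finitely supported functions
int \<Rightarrow> 'a, where f corresponds to \<Sum>m. f m \<otimes> t^m.\<close>

definition fsupp :: "(int \<Rightarrow> 'a::zero) \<Rightarrow> int set" where
  "fsupp f = {m. f m \<noteq> 0}"

definition loop_space :: "(int \<Rightarrow> 'a::zero) set" where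
  "loop_space = {f. finite (fsupp f)}"

definition loop_scale :: "(complex \<Rightarrow> 'a \<Rightarrow> 'a) \<Rightarrow> complex \<Rightarrow> (int \<Rightarrow> 'a) \<Rightarrow> int \<Rightarrow> 'a" where
  "loop_scale sc c f = (\<lambda>k. sc c (f k))"

text \<open>Bilinear extension of
 [u t^m, v t^n] = [u,v] t^(m+n) + m (u\<circ>v) t^(m+n-1) - n (v\<circ>u) t^(m+n-1).\<close>
definition loop_bracket ::
  "(complex \<Rightarrow> 'a \<Rightarrow> 'a) \<Rightarrow> ('a \<Rightarrow> 'a \<Rightarrow> 'a) \<Rightarrow> ('a \<Rightarrow> 'a \<Rightarrow> 'a)
     \<Rightarrow> (int \<Rightarrow> 'a::ab_group_add) \<Rightarrow> (int \<Rightarrow> 'a) \<Rightarrow> int \<Rightarrow> 'a" where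
  "loop_bracket sc br nv f g = (\<lambda>k.
     (\<Sum>m\<in>fsupp f. \<Sum>n\<in>fsupp g.
        (if m + n = k then br (f m) (g n) else 0)
      + (if m + n - 1 = k then sc (of_int m) (nv (f m) (g n)) - sc (of_int n) (nv (g n) (f m))
         else 0)))"

definition loop_phi :: "('a \<Rightarrow> 'a) \<Rightarrow> (int \<Rightarrow> 'a) \<Rightarrow> int \<Rightarrow> 'a" where
  "loop_phi al f = (\<lambda>k. al (f k))"

end

theory Submission
  imports Defs
begin

text \<open>By trilinearity it suffices to test the Hom-Jacobi identity of \<open>\<L>(\<A>)\<close> on monomials
  \<open>a t^l, b t^m, c t^n\<close>, and skew-symmetry on \<open>\<L>(\<A>)\<close> is just skew-symmetry of \<open>[\<cdot>,\<cdot>]\<close>.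
  For a skew bracket the Hom-Jacobiator of these monomials has components only in the degrees
  \<open>s, s - 1, s - 2\<close> with \<open>s = l + m + n\<close>: the Hom-Jacobiator of \<open>a, b, c\<close> in \<open>\<A>\<close>;
  \<open>l C(a,b,c) + m C(b,c,a) + n C(c,a,b)\<close> with \<open>C\<close> the defect of the compatibility identity; and
  \<open>l(l-1) R(a,b,c) + lm S(a,b,c)\<close> plus cyclic permutations, with \<open>R, S\<close> the defects of the two
  Hom-Novikov identities. So the Gel'fand-Dorfman identities kill every component, and
  conversely the degree triples \<open>(0,0,0), (1,0,0), (2,0,0), (1,1,0)\<close> isolate each defect.\<close>

definition loop_monomial :: "'a::zero \<Rightarrow> int \<Rightarrow> int \<Rightarrow> 'a" where
  "loop_monomial u p = (\<lambda>k. if k = p then u else 0)"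

lemma fsupp_loop_monomial: "fsupp (loop_monomial u p) \<subseteq> {p}"
  by (auto simp: fsupp_def loop_monomial_def)

lemma loop_monomial_in_loop_space: "loop_monomial u p \<in> loop_space"
  using finite_subset[OF fsupp_loop_monomial] by (simp add: loop_space_def)

locale loop_algebra_data = vector_space sc for sc :: "complex \<Rightarrow> 'a::ab_group_add \<Rightarrow> 'a" +
  fixes br nv :: "'a \<Rightarrow> 'a \<Rightarrow> 'a" and al :: "'a \<Rightarrow> 'a"
  assumes bilinear_br: "bilinear_on sc UNIV br"
    and bilinear_nv: "bilinear_on sc UNIV nv"
    and linear_al: "linear_on sc UNIV al"
begin

abbreviation lbr :: "(int \<Rightarrow> 'a) \<Rightarrow> (int \<Rightarrow> 'a) \<Rightarrow> int \<Rightarrow> 'a" where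
  "lbr \<equiv> loop_bracket sc br nv"

abbreviation loop_jacobiator :: "(int \<Rightarrow> 'a) \<Rightarrow> (int \<Rightarrow> 'a) \<Rightarrow> (int \<Rightarrow> 'a) \<Rightarrow> int \<Rightarrow> 'a" where
  "loop_jacobiator f g h \<equiv> lbr (lbr f g) (loop_phi al h) + lbr (lbr g h) (loop_phi al f)
     + lbr (lbr h f) (loop_phi al g)"

lemma additive_br_left: "additive (\<lambda>x. br x y)"
  and additive_br_right: "additive (br x)"
  and additive_nv_left: "additive (\<lambda>x. nv x y)"
  and additive_nv_right: "additive (nv x)"
  and additive_al: "additive al"
  using bilinear_br bilinear_nv linear_al
  by (unfold_locales; simp add: bilinear_on_def linear_on_def)+

lemmas br_additive_left [simp] =
    additive.add[OF additive_br_left] additive.diff[OF additive_br_left]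
    additive.minus[OF additive_br_left] additive.zero[OF additive_br_left]
  and br_additive_right [simp] =
    additive.add[OF additive_br_right] additive.diff[OF additive_br_right]
    additive.minus[OF additive_br_right] additive.zero[OF additive_br_right]
  and nv_additive_left [simp] =
    additive.add[OF additive_nv_left] additive.diff[OF additive_nv_left]
    additive.minus[OF additive_nv_left] additive.zero[OF additive_nv_left]
  and nv_additive_right [simp] =
    additive.add[OF additive_nv_right] additive.diff[OF additive_nv_right]
    additive.minus[OF additive_nv_right] additive.zero[OF additive_nv_right]

lemma br_scale [simp]: "br (sc c x) y = sc c (br x y)" "br x (sc c y) = sc c (br x y)"
  and nv_scale [simp]: "nv (sc c x) y = sc c (nv x y)" "nv x (sc c y) = sc c (nv x y)"
  using bilinear_br bilinear_nv by (simp_all add: bilinear_on_def)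

text \<open>The coefficient of \<open>t^k\<close> in \<open>[a t^m, b t^n]\<close>.\<close>

definition mono_bracket :: "int \<Rightarrow> int \<Rightarrow> 'a \<Rightarrow> 'a \<Rightarrow> int \<Rightarrow> 'a" where
  "mono_bracket m n a b k = (if m + n = k then br a b else 0)
      + (if m + n - 1 = k then sc (of_int m) (nv a b) - sc (of_int n) (nv b a) else 0)"

lemma mono_bracket_add_left [simp]:
    "mono_bracket m n (a + a') b k = mono_bracket m n a b k + mono_bracket m n a' b k"
  and mono_bracket_add_right [simp]:
    "mono_bracket m n a (b + b') k = mono_bracket m n a b k + mono_bracket m n a b' k"
  and mono_bracket_scale_left [simp]:
    "mono_bracket m n (sc c a) b k = sc c (mono_bracket m n a b k)"
  and mono_bracket_scale_right [simp]:
    "mono_bracket m n a (sc c b) k = sc c (mono_bracket m n a b k)"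
  by (auto simp: mono_bracket_def algebra_simps mult.commute)

lemma additive_mono_bracket_left: "additive (\<lambda>a. mono_bracket m n a b k)"
  by unfold_locales simp

lemma mono_bracket_zero_left [simp]: "mono_bracket m n 0 b k = 0"
  and mono_bracket_zero_right [simp]: "mono_bracket m n a 0 k = 0"
  by (simp_all add: mono_bracket_def)

lemma mono_bracket_skew:
  assumes "\<forall>x y. br x y = - br y x"
  shows "mono_bracket m n a b k = - mono_bracket n m b a k"
proof -
  have "br a b = - br b a"
    using assms by blast
  then show ?thesis
    by (simp add: mono_bracket_def add.commute)
qed

lemma loop_bracket_eq_sum_mono_bracket:
  "lbr f g k = (\<Sum>m\<in>fsupp f. \<Sum>n\<in>fsupp g. mono_bracket m n (f m) (g n) k)"
  by (simp add: loop_bracket_def mono_bracket_def)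

lemma loop_bracket_eq_sum_over_supersets:
  assumes "finite S" "finite U" "fsupp f \<subseteq> S" "fsupp g \<subseteq> U"
  shows "lbr f g k = (\<Sum>m\<in>S. \<Sum>n\<in>U. mono_bracket m n (f m) (g n) k)"
proof -
  have "(\<Sum>m\<in>S. \<Sum>n\<in>U. mono_bracket m n (f m) (g n) k)
      = (\<Sum>m\<in>S. \<Sum>n\<in>fsupp g. mono_bracket m n (f m) (g n) k)"
    by (rule sum.cong[OF refl], rule sum.mono_neutral_right) (use assms in \<open>auto simp: fsupp_def\<close>)
  also have "\<dots> = (\<Sum>m\<in>fsupp f. \<Sum>n\<in>fsupp g. mono_bracket m n (f m) (g n) k)"
    by (rule sum.mono_neutral_right) (use assms in \<open>auto simp: fsupp_def\<close>)
  finally show ?thesis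
    by (simp add: loop_bracket_eq_sum_mono_bracket)
qed

definition bracket_degrees :: "int set \<Rightarrow> int set \<Rightarrow> int set" where
  "bracket_degrees F G = (\<lambda>(m, n). m + n) ` (F \<times> G) \<union> (\<lambda>(m, n). m + n - 1) ` (F \<times> G)"

lemma finite_bracket_degrees: "finite F \<Longrightarrow> finite G \<Longrightarrow> finite (bracket_degrees F G)"
  by (simp add: bracket_degrees_def)

lemma fsupp_loop_bracket:
  assumes "finite F" "finite G" "fsupp f \<subseteq> F" "fsupp g \<subseteq> G"
  shows "fsupp (lbr f g) \<subseteq> bracket_degrees F G"
proof
  fix k assume k: "k \<in> fsupp (lbr f g)"
  show "k \<in> bracket_degrees F G"
  proof (rule ccontr)
    assume "k \<notin> bracket_degrees F G"
    then have "mono_bracket m n (f m) (g n) k = 0" if "m \<in> F" "n \<in> G" for m n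
      using that by (force simp: mono_bracket_def bracket_degrees_def)
    then have "lbr f g k = 0"
      by (simp add: loop_bracket_eq_sum_over_supersets[OF assms])
    with k show False
      by (simp add: fsupp_def)
  qed
qed

lemma fsupp_loop_scale: "fsupp (loop_scale sc c f) \<subseteq> fsupp f"
  and fsupp_loop_phi: "fsupp (loop_phi al f) \<subseteq> fsupp f"
  by (auto simp: fsupp_def loop_scale_def loop_phi_def additive.zero[OF additive_al])

lemma subspace_loop_space: "subspace_on (loop_scale sc) loop_space"
  unfolding subspace_on_def loop_space_def
proof (intro conjI ballI allI; clarsimp)
  show "finite (fsupp 0)"
    by (simp add: fsupp_def)
next
  fix f g :: "int \<Rightarrow> 'a" assume "finite (fsupp f)" "finite (fsupp g)"
  then show "finite (fsupp (f + g))"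
    by (auto intro: finite_subset[of _ "fsupp f \<union> fsupp g"] simp: fsupp_def)
next
  fix c and f :: "int \<Rightarrow> 'a" assume "finite (fsupp f)"
  then show "finite (fsupp (loop_scale sc c f))"
    using fsupp_loop_scale finite_subset by blast
qed

lemma linear_loop_phi: "linear_on (loop_scale sc) loop_space (loop_phi al)"
  using additive.add[OF additive_al] linear_al fsupp_loop_phi finite_subset
  by (fastforce simp: linear_on_def loop_space_def loop_phi_def loop_scale_def)

lemma bilinear_loop_bracket: "bilinear_on (loop_scale sc) loop_space lbr"
  unfolding bilinear_on_def
proof (intro conjI ballI allI)
  fix f g h :: "int \<Rightarrow> 'a" and c
  assume "f \<in> loop_space" "g \<in> loop_space" "h \<in> loop_space"
  then have fin: "finite (fsupp f)" "finite (fsupp g)" "finite (fsupp h)"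
    by (auto simp: loop_space_def)
  let ?S = "fsupp f \<union> fsupp g"
  have S: "finite ?S" "fsupp (f + g) \<subseteq> ?S" "fsupp f \<subseteq> ?S" "fsupp g \<subseteq> ?S"
    using fin by (auto simp: fsupp_def)
  show "lbr f g \<in> loop_space"
    using finite_subset[OF fsupp_loop_bracket[OF fin(1,2) order_refl order_refl]]
      finite_bracket_degrees[OF fin(1,2)] by (simp add: loop_space_def)
  show "lbr (f + g) h = lbr f h + lbr g h" "lbr h (f + g) = lbr h f + lbr h g"
    by (simp_all add: fun_eq_iff sum.distrib loop_bracket_eq_sum_over_supersets[OF S(1) fin(3)]
        loop_bracket_eq_sum_over_supersets[OF fin(3) S(1)] S(2-4))
  show "lbr (loop_scale sc c f) g = loop_scale sc c (lbr f g)"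
    "lbr f (loop_scale sc c g) = loop_scale sc c (lbr f g)"
    by (simp_all add: fun_eq_iff
        loop_bracket_eq_sum_over_supersets[OF fin(1,2) fsupp_loop_scale order_refl]
        loop_bracket_eq_sum_over_supersets[OF fin(1,2) order_refl fsupp_loop_scale],
        simp_all add: loop_scale_def scale_sum_right loop_bracket_eq_sum_over_supersets[OF fin(1,2)])
qed

text \<open>The coefficients of \<open>t^(s-1)\<close> and \<open>t^(s-2)\<close> in \<open>[[a t^l, b t^m], c t^n]\<close>, \<open>s = l + m + n\<close>.\<close>

definition jacobiator1 :: "int \<Rightarrow> int \<Rightarrow> int \<Rightarrow> 'a \<Rightarrow> 'a \<Rightarrow> 'a \<Rightarrow> 'a" where
  "jacobiator1 l m n a b c = sc (of_int (l + m)) (nv (br a b) c) - sc (of_int n) (nv c (br a b))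
      + br (sc (of_int l) (nv a b) - sc (of_int m) (nv b a)) c"

definition jacobiator2 :: "int \<Rightarrow> int \<Rightarrow> int \<Rightarrow> 'a \<Rightarrow> 'a \<Rightarrow> 'a \<Rightarrow> 'a" where
  "jacobiator2 l m n a b c =
     sc (of_int (l + m - 1)) (nv (sc (of_int l) (nv a b) - sc (of_int m) (nv b a)) c)
      - sc (of_int n) (nv c (sc (of_int l) (nv a b) - sc (of_int m) (nv b a)))"

definition mono_jacobiator :: "int \<Rightarrow> int \<Rightarrow> int \<Rightarrow> 'a \<Rightarrow> 'a \<Rightarrow> 'a \<Rightarrow> int \<Rightarrow> 'a" where
  "mono_jacobiator l m n a b c k = (if k = l + m + n then br (br a b) c else 0)
      + (if k = l + m + n - 1 then jacobiator1 l m n a b c else 0)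
      + (if k = l + m + n - 2 then jacobiator2 l m n a b c else 0)"

lemma sum_mono_bracket_mono_bracket:
  assumes "finite P" "l + m \<in> P" "l + m - 1 \<in> P"
  shows "(\<Sum>p\<in>P. mono_bracket p n (mono_bracket l m a b p) c k) = mono_jacobiator l m n a b c k"
proof -
  have "mono_bracket p n (mono_bracket l m a b p) c k
      = (if l + m = p then mono_bracket p n (br a b) c k else 0)
        + (if l + m - 1 = p then mono_bracket p n (sc (of_int l) (nv a b) - sc (of_int m) (nv b a)) c k
           else 0)" for p
    by (cases "l + m = p"; cases "l + m - 1 = p") (simp_all add: mono_bracket_def[of l m])
  then have "(\<Sum>p\<in>P. mono_bracket p n (mono_bracket l m a b p) c k)
      = mono_bracket (l + m) n (br a b) c k
        + mono_bracket (l + m - 1) n (sc (of_int l) (nv a b) - sc (of_int m) (nv b a)) c k"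
    using assms by (simp add: sum.distrib)
  also have "\<dots> = mono_jacobiator l m n a b c k"
    by (auto simp: mono_bracket_def mono_jacobiator_def jacobiator1_def jacobiator2_def)
  finally show ?thesis .
qed

lemma loop_bracket_loop_bracket_eq_sum:
  assumes F: "finite F" "fsupp f \<subseteq> F" and G: "finite G" "fsupp g \<subseteq> G"
    and H: "finite H" "fsupp h \<subseteq> H"
  shows "lbr (lbr f g) (loop_phi al h) k
     = (\<Sum>l\<in>F. \<Sum>m\<in>G. \<Sum>n\<in>H. mono_jacobiator l m n (f l) (g m) (al (h n)) k)"
proof -
  let ?P = "bracket_degrees F G"
  have P: "finite ?P" "fsupp (lbr f g) \<subseteq> ?P"
    using F G by (simp_all add: finite_bracket_degrees fsupp_loop_bracket)
  have "lbr (lbr f g) (loop_phi al h) k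
      = (\<Sum>p\<in>?P. \<Sum>n\<in>H. mono_bracket p n (lbr f g p) (al (h n)) k)"
    by (simp add: loop_bracket_eq_sum_over_supersets[OF P(1) H(1) P(2) order_trans[OF fsupp_loop_phi H(2)]])
      (simp add: loop_phi_def)
  also have "\<dots> = (\<Sum>p\<in>?P. \<Sum>n\<in>H. \<Sum>l\<in>F. \<Sum>m\<in>G.
      mono_bracket p n (mono_bracket l m (f l) (g m) p) (al (h n)) k)"
    by (simp add: loop_bracket_eq_sum_over_supersets[OF F(1) G(1) F(2) G(2)]
        additive.sum[OF additive_mono_bracket_left])
  also have "\<dots> = (\<Sum>l\<in>F. \<Sum>m\<in>G. \<Sum>n\<in>H. \<Sum>p\<in>?P.
      mono_bracket p n (mono_bracket l m (f l) (g m) p) (al (h n)) k)"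
    by (simp only: sum.swap[where A = H and B = F] sum.swap[where A = H and B = G]
        sum.swap[where A = ?P and B = F] sum.swap[where A = ?P and B = G]
        sum.swap[where A = ?P and B = H])
  also have "\<dots> = (\<Sum>l\<in>F. \<Sum>m\<in>G. \<Sum>n\<in>H. mono_jacobiator l m n (f l) (g m) (al (h n)) k)"
    by (intro sum.cong refl sum_mono_bracket_mono_bracket[OF P(1)])
      (force simp: bracket_degrees_def)+
  finally show ?thesis .
qed

definition jacobi_defect :: "'a \<Rightarrow> 'a \<Rightarrow> 'a \<Rightarrow> 'a" where
  "jacobi_defect x y z = br (br x y) (al z) + br (br y z) (al x) + br (br z x) (al y)"

definition compat_defect :: "'a \<Rightarrow> 'a \<Rightarrow> 'a \<Rightarrow> 'a" where
  "compat_defect x y z = br (nv x y) (al z) - br (nv x z) (al y) + nv (br x y) (al z)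
     - nv (br x z) (al y) - nv (al x) (br y z)"

definition right_comm_defect :: "'a \<Rightarrow> 'a \<Rightarrow> 'a \<Rightarrow> 'a" where
  "right_comm_defect x y z = nv (nv x y) (al z) - nv (nv x z) (al y)"

definition left_symm_defect :: "'a \<Rightarrow> 'a \<Rightarrow> 'a \<Rightarrow> 'a" where
  "left_symm_defect x y z = (nv (nv x y) (al z) - nv (al x) (nv y z))
     - (nv (nv y x) (al z) - nv (al y) (nv x z))"

lemma jacobiator1_cyclic:
  "jacobiator1 l m n a b (al c) + jacobiator1 m n l b c (al a) + jacobiator1 n l m c a (al b)
   = sc (of_int l) (compat_defect a b c + nv (br c a + br a c) (al b))
     + sc (of_int m) (compat_defect b c a + nv (br a b + br b a) (al c))
     + sc (of_int n) (compat_defect c a b + nv (br b c + br c b) (al a))"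
  unfolding jacobiator1_def compat_defect_def
  by (simp add: algebra_simps)

lemma jacobiator2_cyclic:
  "jacobiator2 l m n a b (al c) + jacobiator2 m n l b c (al a) + jacobiator2 n l m c a (al b)
   = sc (of_int (l * (l - 1))) (right_comm_defect a b c)
     + sc (of_int (m * (m - 1))) (right_comm_defect b c a)
     + sc (of_int (n * (n - 1))) (right_comm_defect c a b)
     + sc (of_int (l * m)) (left_symm_defect a b c) + sc (of_int (m * n)) (left_symm_defect b c a)
     + sc (of_int (n * l)) (left_symm_defect c a b)"
  unfolding jacobiator2_def right_comm_defect_def left_symm_defect_def
  by (simp add: algebra_simps)

definition mono_hom_jacobiator :: "int \<Rightarrow> int \<Rightarrow> int \<Rightarrow> 'a \<Rightarrow> 'a \<Rightarrow> 'a \<Rightarrow> int \<Rightarrow> 'a" where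
  "mono_hom_jacobiator l m n a b c k = mono_jacobiator l m n a b (al c) k
     + mono_jacobiator m n l b c (al a) k + mono_jacobiator n l m c a (al b) k"

lemma mono_hom_jacobiator_eq_defects:
  assumes skew: "\<forall>x y. br x y = - br y x"
  shows "mono_hom_jacobiator l m n a b c k = (if k = l + m + n then jacobi_defect a b c else 0)
      + (if k = l + m + n - 1 then sc (of_int l) (compat_defect a b c)
           + sc (of_int m) (compat_defect b c a) + sc (of_int n) (compat_defect c a b) else 0)
      + (if k = l + m + n - 2 then sc (of_int (l * (l - 1))) (right_comm_defect a b c)
           + sc (of_int (m * (m - 1))) (right_comm_defect b c a)
           + sc (of_int (n * (n - 1))) (right_comm_defect c a b)
           + sc (of_int (l * m)) (left_symm_defect a b c)
           + sc (of_int (m * n)) (left_symm_defect b c a)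
           + sc (of_int (n * l)) (left_symm_defect c a b) else 0)"
proof -
  have sym: "br c a + br a c = 0" "br a b + br b a = 0" "br b c + br c b = 0"
    using skew[rule_format, of c a] skew[rule_format, of a b] skew[rule_format, of b c]
    by simp_all
  have deg: "m + n + l = l + m + n" "n + l + m = l + m + n"
    by simp_all
  show ?thesis
    unfolding mono_hom_jacobiator_def mono_jacobiator_def deg
    by (cases "k = l + m + n"; cases "k = l + m + n - 1"; cases "k = l + m + n - 2")
      (simp_all add: jacobiator1_cyclic jacobiator2_cyclic sym jacobi_defect_def)
qed

lemma mono_hom_jacobiator_eq_0_iff:
  assumes skew: "\<forall>x y. br x y = - br y x"
  shows "(\<forall>l m n a b c k. mono_hom_jacobiator l m n a b c k = 0) \<longleftrightarrow>
    (\<forall>x y z. jacobi_defect x y z = 0 \<and> compat_defect x y z = 0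
       \<and> right_comm_defect x y z = 0 \<and> left_symm_defect x y z = 0)"
proof
  assume vanish: "\<forall>l m n a b c k. mono_hom_jacobiator l m n a b c k = 0"
  show "\<forall>x y z. jacobi_defect x y z = 0 \<and> compat_defect x y z = 0
       \<and> right_comm_defect x y z = 0 \<and> left_symm_defect x y z = 0"
  proof (intro allI conjI)
    fix x y z
    note degree_0 = vanish[rule_format, of _ _ _ x y z 0, unfolded mono_hom_jacobiator_eq_defects[OF skew]]
    show "jacobi_defect x y z = 0"
      using degree_0[of 0 0 0] by simp
    show "compat_defect x y z = 0"
      using degree_0[of 1 0 0] by simp
    show "right_comm_defect x y z = 0"
      using degree_0[of 2 0 0] by simp
    show "left_symm_defect x y z = 0"
      using degree_0[of 1 1 0] by simp
  qed
qed (simp add: mono_hom_jacobiator_eq_defects[OF skew])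

lemma loop_bracket_loop_monomial:
  "lbr (loop_monomial a m) (loop_monomial b n) k = mono_bracket m n a b k"
  by (subst loop_bracket_eq_sum_over_supersets[OF _ _ fsupp_loop_monomial fsupp_loop_monomial])
    (simp_all add: loop_monomial_def)

lemma loop_bracket_loop_bracket_loop_monomial:
  "lbr (lbr (loop_monomial a l) (loop_monomial b m)) (loop_phi al (loop_monomial c n)) k
     = mono_jacobiator l m n a b (al c) k"
  by (subst loop_bracket_loop_bracket_eq_sum[OF _ fsupp_loop_monomial _ fsupp_loop_monomial
        _ fsupp_loop_monomial]) (simp_all add: loop_monomial_def)

lemma loop_bracket_skew_iff:
  "(\<forall>f\<in>loop_space. \<forall>g\<in>loop_space. lbr f g = - lbr g f) \<longleftrightarrow> (\<forall>x y. br x y = - br y x)"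
proof
  assume skew_loop: "\<forall>f\<in>loop_space. \<forall>g\<in>loop_space. lbr f g = - lbr g f"
  show "\<forall>x y. br x y = - br y x"
  proof (intro allI)
    fix x y
    have "lbr (loop_monomial x 0) (loop_monomial y 0) = - lbr (loop_monomial y 0) (loop_monomial x 0)"
      by (rule skew_loop[rule_format, OF loop_monomial_in_loop_space loop_monomial_in_loop_space])
    then have "lbr (loop_monomial x 0) (loop_monomial y 0) 0
        = - lbr (loop_monomial y 0) (loop_monomial x 0) 0"
      by (simp only: uminus_apply)
    then show "br x y = - br y x"
      by (simp add: loop_bracket_loop_monomial mono_bracket_def)
  qed
next
  assume skew: "\<forall>x y. br x y = - br y x"
  have "lbr f g = - lbr g f" for f g
  proof
    fix k
    have "lbr f g k = (\<Sum>m\<in>fsupp f. \<Sum>n\<in>fsupp g. - mono_bracket n m (g n) (f m) k)"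
      unfolding loop_bracket_eq_sum_mono_bracket by (intro sum.cong refl mono_bracket_skew[OF skew])
    also have "\<dots> = (- lbr g f) k"
      by (subst sum.swap) (simp add: loop_bracket_eq_sum_mono_bracket sum_negf)
    finally show "lbr f g k = (- lbr g f) k" .
  qed
  then show "\<forall>f\<in>loop_space. \<forall>g\<in>loop_space. lbr f g = - lbr g f"
    by (intro ballI)
qed

lemma loop_hom_jacobi_iff:
  "(\<forall>f\<in>loop_space. \<forall>g\<in>loop_space. \<forall>h\<in>loop_space. loop_jacobiator f g h = 0) \<longleftrightarrow>
    (\<forall>l m n a b c k. mono_hom_jacobiator l m n a b c k = 0)"
proof
  assume jacobi_loop:
    "\<forall>f\<in>loop_space. \<forall>g\<in>loop_space. \<forall>h\<in>loop_space. loop_jacobiator f g h = 0"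
  show "\<forall>l m n a b c k. mono_hom_jacobiator l m n a b c k = 0"
  proof (intro allI)
    fix l m n a b c k
    have "loop_jacobiator (loop_monomial a l) (loop_monomial b m) (loop_monomial c n) = 0"
      by (rule jacobi_loop[rule_format, OF loop_monomial_in_loop_space loop_monomial_in_loop_space
            loop_monomial_in_loop_space])
    then show "mono_hom_jacobiator l m n a b c k = 0"
      by (simp add: mono_hom_jacobiator_def loop_bracket_loop_bracket_loop_monomial fun_eq_iff)
  qed
next
  assume vanish: "\<forall>l m n a b c k. mono_hom_jacobiator l m n a b c k = 0"
  show "\<forall>f\<in>loop_space. \<forall>g\<in>loop_space. \<forall>h\<in>loop_space. loop_jacobiator f g h = 0"
  proof (intro ballI ext)
    fix f g h :: "int \<Rightarrow> 'a" and k
    assume "f \<in> loop_space" "g \<in> loop_space" "h \<in> loop_space"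
    then have fin: "finite (fsupp f)" "finite (fsupp g)" "finite (fsupp h)"
      by (auto simp: loop_space_def)
    let ?F = "fsupp f" and ?G = "fsupp g" and ?H = "fsupp h"
    note expand = loop_bracket_loop_bracket_eq_sum[OF _ order_refl _ order_refl _ order_refl]
    have "lbr (lbr g h) (loop_phi al f) k
        = (\<Sum>m\<in>?G. \<Sum>n\<in>?H. \<Sum>l\<in>?F. mono_jacobiator m n l (g m) (h n) (al (f l)) k)"
      by (rule expand[OF fin(2,3,1)])
    also have "\<dots> = (\<Sum>l\<in>?F. \<Sum>m\<in>?G. \<Sum>n\<in>?H. mono_jacobiator m n l (g m) (h n) (al (f l)) k)"
      by (simp only: sum.swap[where A = ?H and B = ?F] sum.swap[where A = ?G and B = ?F])
    finally have gh: "lbr (lbr g h) (loop_phi al f) k = \<dots>" .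
    have "lbr (lbr h f) (loop_phi al g) k
        = (\<Sum>n\<in>?H. \<Sum>l\<in>?F. \<Sum>m\<in>?G. mono_jacobiator n l m (h n) (f l) (al (g m)) k)"
      by (rule expand[OF fin(3,1,2)])
    also have "\<dots> = (\<Sum>l\<in>?F. \<Sum>m\<in>?G. \<Sum>n\<in>?H. mono_jacobiator n l m (h n) (f l) (al (g m)) k)"
      by (simp only: sum.swap[where A = ?H and B = ?F] sum.swap[where A = ?H and B = ?G])
    finally have hf: "lbr (lbr h f) (loop_phi al g) k = \<dots>" .
    have "loop_jacobiator f g h k = (\<Sum>l\<in>?F. \<Sum>m\<in>?G. \<Sum>n\<in>?H.
        mono_hom_jacobiator l m n (f l) (g m) (h n) k)"
      by (simp add: expand[OF fin] gh hf mono_hom_jacobiator_def sum.distrib)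
    also have "\<dots> = 0"
      by (simp add: vanish)
    finally show "loop_jacobiator f g h k = 0 k"
      by simp
  qed
qed

lemma hom_lie_on_loop_iff:
  "hom_lie_on (loop_scale sc) loop_space lbr (loop_phi al) \<longleftrightarrow>
    (\<forall>x y. br x y = - br y x) \<and> (\<forall>l m n a b c k. mono_hom_jacobiator l m n a b c k = 0)"
  unfolding hom_lie_on_def loop_bracket_skew_iff loop_hom_jacobi_iff
  using subspace_loop_space bilinear_loop_bracket linear_loop_phi by blast

lemma hom_GD_bialgebra_on_iff:
  "hom_GD_bialgebra_on sc UNIV br nv al \<longleftrightarrow> (\<forall>x y. br x y = - br y x) \<and>
    (\<forall>x y z. jacobi_defect x y z = 0 \<and> compat_defect x y z = 0
       \<and> right_comm_defect x y z = 0 \<and> left_symm_defect x y z = 0)"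
  unfolding hom_GD_bialgebra_on_def hom_lie_on_def hom_novikov_on_def jacobi_defect_def
    compat_defect_def right_comm_defect_def left_symm_defect_def
  by (simp add: subspace_on_def bilinear_br bilinear_nv linear_al; blast)

end

theorem theorem5p1:
  fixes sc :: "complex \<Rightarrow> 'a::ab_group_add \<Rightarrow> 'a"
    and br nv :: "'a \<Rightarrow> 'a \<Rightarrow> 'a"
    and al :: "'a \<Rightarrow> 'a"
  assumes "vector_space sc"
    and "bilinear_on sc UNIV br"
    and "bilinear_on sc UNIV nv"
    and "linear_on sc UNIV al"
  shows "hom_lie_on (loop_scale sc) loop_space (loop_bracket sc br nv) (loop_phi al)
     \<longleftrightarrow> hom_GD_bialgebra_on sc UNIV br nv al"
proof -
  interpret loop_algebra_data sc br nv al
    using assms by (simp add: loop_algebra_data_def loop_algebra_data_axioms_def)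
  show ?thesis
    unfolding hom_lie_on_loop_iff hom_GD_bialgebra_on_iff
    by (rule conj_cong[OF refl mono_hom_jacobiator_eq_0_iff])
qed

end
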